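(* Fix a real $\varepsilon\in(0,1/2]$. Let $\mathcal C\subseteq F^n$ be a (not necessarily linear) code with rate $R=(\log_q|\mathcal C|)/n\in[\varepsilon,1-\varepsilon]$, let $L\in\mathbb Z^+$ satisfy $$L<\frac{1}{\sqrt{2n}}\,2^{\eta_q(\varepsilon)\,n},$$ and let $\tau\in\mathbb Z_{\ge0}$ satisfy $\tau\ge \frac{L n(1-R)}{L+1}$. If $\mathcal C$ is $(\tau,L)$-list decodable, then $L<q-1$.
   Context: $F=\mathrm{GF}(q)$. For $L\in\mathbb Z^+$ and $\tau\in\mathbb Z_{\ge0}$, a code $\mathcal C\subseteq F^n$ is $(\tau,L)$-list decodable if for every $y\in F^n$ at most $L$ codewords of $\mathcal C$ lie at Hamming distance at most $\tau$ from $y$. With $\mathsf h(x)=-x\log_2x-(1-x)\log_2(1-x)$ the binary entropy function, define for $\varepsilon\in[0,1/2]$: $\eta_q(\varepsilon)=\mathsf h\!\left(\frac{q-1}{q}(1-\varepsilon)\right)-(1-\varepsilon)\,\mathsf h(1/q)$. *)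

theory Defs
  imports Complex_Main
begin

text \<open>Words of length n over the alphabet 'a are lists of length n.\<close>

definition hamming_dist :: "'a list \<Rightarrow> 'a list \<Rightarrow> nat" where
  "hamming_dist x y = card {i. i < length x \<and> x ! i \<noteq> y ! i}"

definition list_decodable :: "nat \<Rightarrow> 'a list set \<Rightarrow> nat \<Rightarrow> nat \<Rightarrow> bool" where
  "list_decodable n C tau L \<longleftrightarrow>
     (\<forall>y. length y = n \<longrightarrow> card {c \<in> C. hamming_dist c y \<le> tau} \<le> L)"

definition bin_entropy :: "real \<Rightarrow> real" where
  "bin_entropy x = - x * log 2 x - (1 - x) * log 2 (1 - x)"

definition eta :: "nat \<Rightarrow> real \<Rightarrow> real" where
  "eta q eps = bin_entropy ((real q - 1) / real q * (1 - eps)) - (1 - eps) * bin_entropy (1 / real q)"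

end

(* Suppose L >= q - 1, so that L/(L+1) >= (q-1)/q and tau >= (q-1)/q (1-R) n. Double counting the
   pairs (codeword, word within distance tau) gives |C| (n choose k) (q-1)^k <= L q^n for every k <= tau.
   Choosing k between (q-1)/q (1-R) n and (q-1)/q n, a Stirling estimate
   (n choose k) >= 2^(n h(k/n)) / sqrt(2n) and the monotonicity of h(x) + x log(q-1) below (q-1)/q turn
   this into L >= 2^(eta_q(R) n) / sqrt(2n). Since eta_q is concave and eta_q(eps) <= eta_q(1-eps), it is
   at least eta_q(eps) on [eps, 1-eps], contradicting the bound on L. If no such k exists, then nR < 1,
   i.e. |C| < q, whereas the bound on L already forces L < q^(eps n) <= |C|. *)

theory Submission
  imports Defs "HOL-Analysis.Convex"
begin

lemma ln_one_plus_div_one_minus_lower: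
  fixes x :: real
  assumes "0 \<le> x" "x < 1"
  shows "2*x + 2/3*x^3 \<le> ln ((1+x)/(1-x))"
proof -
  let ?f = "\<lambda>t::real. ln (1+t) - ln (1-t) - 2*t - 2/3*t^3"
  have "?f 0 \<le> ?f x"
  proof (rule DERIV_nonneg_imp_nondecreasing[OF assms(1)])
    fix t :: real assume t: "0 \<le> t" "t \<le> x"
    hence pos: "1+t > 0" "1-t > 0" using assms by auto
    have "DERIV ?f t :> 1/(1+t) + 1/(1-t) - 2 - 2*t^2"
      using pos by (auto intro!: derivative_eq_intros)
    moreover have "1/(1+t) + 1/(1-t) - 2 - 2*t^2 = 2*t^4/((1+t)*(1-t))"
      using pos by (simp add: divide_simps) (simp add: algebra_simps power4_eq_xxxx power2_eq_square)
    ultimately show "\<exists>y. DERIV ?f t :> y \<and> 0 \<le> y"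
      using pos by fastforce
  qed
  thus ?thesis using assms by (simp add: ln_div)
qed

lemma ln_one_plus_div_one_minus_upper:
  fixes x :: real
  assumes "0 \<le> x" "x < 1"
  shows "ln ((1+x)/(1-x)) \<le> 2*x + 2/3*x^3/((1+x)*(1-x))"
proof -
  let ?f = "\<lambda>t::real. 2*t + 2/3*t^3/((1+t)*(1-t)) - ln (1+t) + ln (1-t)"
  have "?f 0 \<le> ?f x"
  proof (rule DERIV_nonneg_imp_nondecreasing[OF assms(1)])
    fix t :: real assume t: "0 \<le> t" "t \<le> x"
    hence pos: "1+t > 0" "1-t > 0" using assms by auto
    have "DERIV ?f t :> 4/3*t^4/((1+t)*(1-t))^2"
      apply (intro derivative_eq_intros)
      using pos apply simp_all
      apply (simp add: divide_simps)
      apply (simp add: algebra_simps power2_eq_square power3_eq_cube power4_eq_xxxx)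
      done
    thus "\<exists>y. DERIV ?f t :> y \<and> 0 \<le> y" by fastforce
  qed
  thus ?thesis using assms by (simp add: ln_div)
qed

lemma ln_2_lower: "56/81 \<le> ln (2::real)"
  using ln_one_plus_div_one_minus_lower[of "1/3"] by (simp add: power3_eq_cube)

(* ln (j! e^j / j^(j+1/2)): it decreases to ln (sqrt (2 pi)), and 11/12 is a lower bound. *)
definition stirling_rem :: "nat \<Rightarrow> real" where
  "stirling_rem j = ln (fact j) + real j - (real j + 1/2) * ln (real j)"

lemma stirling_rem_diff:
  assumes "1 \<le> j"
  shows "stirling_rem j - stirling_rem (Suc j) = (real j + 1/2) * ln ((real j + 1) / real j) - 1"
proof -
  have fact: "ln (fact (Suc j) :: real) = ln (real j + 1) + ln (fact j)"
    by (simp add: ln_mult add.commute)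
  have ratio: "ln ((real j + 1) / real j) = ln (real j + 1) - ln (real j)"
    using assms by (simp add: ln_div)
  show ?thesis
    unfolding stirling_rem_def ratio fact by (simp add: algebra_simps)
qed

lemma stirling_rem_diff_bounds:
  assumes "1 \<le> j"
  shows "0 \<le> stirling_rem j - stirling_rem (Suc j)"
    and "stirling_rem j - stirling_rem (Suc j) \<le> 1/(12*real j) - 1/(12*(real j + 1))"
proof -
  define x :: real where "x = 1 / (2 * real j + 1)"
  have j: "real j \<ge> 1" using assms by simp
  have x: "0 \<le> x" "x < 1" using j by (auto simp: x_def)
  have ratio: "(1+x)/(1-x) = (real j + 1)/real j"
    using j unfolding x_def by (simp add: divide_simps)
  have lin: "(real j + 1/2) * (2*x) = 1"
    using j unfolding x_def by (simp add: divide_simps)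
  have cubic: "(real j + 1/2) * (2/3*x^3/((1+x)*(1-x))) = 1/(12*real j) - 1/(12*(real j + 1))"
    using j unfolding x_def by (simp add: divide_simps) (simp add: algebra_simps power3_eq_cube)
  have "1 \<le> (real j + 1/2) * (2*x + 2/3*x^3)"
    using lin x j by (simp add: distrib_left)
  also have "\<dots> \<le> (real j + 1/2) * ln ((real j + 1)/real j)"
    using ln_one_plus_div_one_minus_lower[OF x] ratio j by (intro mult_left_mono) auto
  finally show "0 \<le> stirling_rem j - stirling_rem (Suc j)"
    using stirling_rem_diff[OF assms] by simp
  have "(real j + 1/2) * ln ((real j + 1)/real j) \<le> (real j + 1/2) * (2*x + 2/3*x^3/((1+x)*(1-x)))"
    using ln_one_plus_div_one_minus_upper[OF x] ratio j by (intro mult_left_mono) auto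
  also have "\<dots> = 1 + (1/(12*real j) - 1/(12*(real j + 1)))"
    using lin cubic by (simp add: distrib_left)
  finally show "stirling_rem j - stirling_rem (Suc j) \<le> 1/(12*real j) - 1/(12*(real j + 1))"
    using stirling_rem_diff[OF assms] by simp
qed

lemma stirling_rem_antimono:
  assumes "1 \<le> i" "i \<le> j"
  shows "stirling_rem j \<le> stirling_rem i"
  using assms(2)
proof (induction j rule: dec_induct)
  case (step k)
  thus ?case using stirling_rem_diff_bounds(1)[of k] assms(1) by simp
qed simp

lemma stirling_rem_lower:
  assumes "1 \<le> j"
  shows "11/12 + 1/(12*real j) \<le> stirling_rem j"
  using assms
proof (induction j rule: dec_induct)
  case base
  show ?case by (simp add: stirling_rem_def)
next
  case (step k)
  thus ?case using stirling_rem_diff_bounds(2)[of k] by (simp add: algebra_simps)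
qed

lemma ln_binomial_stirling:
  assumes "k \<le> n"
  shows "ln (real (n choose k)) =
           (stirling_rem n - stirling_rem k - stirling_rem (n-k))
         + (real n * ln (real n) - real k * ln (real k) - real (n-k) * ln (real (n-k)))
         + (ln (real n) - ln (real k) - ln (real (n-k))) / 2"
proof -
  obtain m where m: "n = k + m" using assms le_Suc_ex by blast
  have "real (n choose k) = fact n / (fact k * fact m)"
    using binomial_fact[OF assms] m by simp
  hence "ln (real (n choose k)) = ln (fact n) - ln (fact k) - ln (fact m)"
    by (simp add: ln_div ln_mult)
  thus ?thesis
    unfolding stirling_rem_def m by (simp add: algebra_simps) (simp add: field_simps)
qed

lemma ln_binomial_ge_interior:
  assumes "2 \<le> k" "2 \<le> n - k"
  shows "real n * ln (real n) - real k * ln (real k) - real (n-k) * ln (real (n-k)) - ln (2 * real n) / 2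
           \<le> ln (real (n choose k))"
proof -
  define m where "m = n - k"
  have pos: "real k > 0" "real m > 0" "real n > 0" using assms unfolding m_def by auto
  have n: "real n = real k + real m" using assms unfolding m_def by simp
  have rem: "11/12 - 2 * stirling_rem 2 \<le> stirling_rem n - stirling_rem k - stirling_rem m"
  proof -
    have "11/12 + 1/(12 * real n) \<le> stirling_rem n"
      using assms by (intro stirling_rem_lower) linarith
    moreover have "0 \<le> 1/(12 * real n)" by simp
    moreover have "stirling_rem k \<le> stirling_rem 2" "stirling_rem m \<le> stirling_rem 2"
      using stirling_rem_antimono assms unfolding m_def by auto
    ultimately show ?thesis by linarith
  qed
  have "4 * (real k * real m) \<le> real n * real n"
    using sum_squares_ge_zero[of "real k - real m" 0] unfolding n by (simp add: algebra_simps power2_eq_square)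
  hence "ln (4 * (real k * real m)) \<le> ln (real n * real n)"
    using pos by simp
  moreover have "ln (4::real) = 2 * ln 2"
    using ln_realpow[of 2 2] by simp
  ultimately have logs: "2 * ln 2 + ln (real k) + ln (real m) \<le> 2 * ln (real n)"
    using pos by (simp add: ln_mult)
  have "k \<le> n" using assms by simp
  from ln_binomial_stirling[OF this]
  have "ln (real (n choose k)) = (stirling_rem n - stirling_rem k - stirling_rem m)
      + (real n * ln (real n) - real k * ln (real k) - real m * ln (real m))
      + (ln (real n) - ln (real k) - ln (real m)) / 2"
    unfolding m_def .
  moreover have "stirling_rem 2 = 2 - 3/2 * ln 2"
    by (simp add: stirling_rem_def)
  moreover have "ln (2 * real n) = ln 2 + ln (real n)"
    using pos by (simp add: ln_mult)
  \<comment> \<open>the constants close up because 9/2 * ln 2 > 37/12\<close>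
  ultimately show ?thesis
    using rem logs ln_2_lower unfolding m_def[symmetric] by argo
qed

lemma mult_ln_diff_pred_le:
  assumes "2 \<le> n"
  shows "(real n - 1) * (ln (real n) - ln (real n - 1)) \<le> ln (2 * real n) / 2"
proof -
  have n: "real n \<ge> 2" using assms by simp
  have "ln (real n) - ln (real n - 1) = ln (real n / (real n - 1))"
    using n by (simp add: ln_div)
  also have "\<dots> \<le> real n / (real n - 1) - 1"
    using n by (intro ln_le_minus_one) simp
  finally have "(real n - 1) * (ln (real n) - ln (real n - 1)) \<le> (real n - 1) * (real n / (real n - 1) - 1)"
    using n by (intro mult_left_mono) auto
  also have "\<dots> = 1"
    using n by (simp add: field_simps)
  finally have le_1: "(real n - 1) * (ln (real n) - ln (real n - 1)) \<le> 1" .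
  consider "n = 2" | "n = 3" | "n \<ge> 4" using assms by linarith
  thus ?thesis
  proof cases
    case 1
    have "ln (4::real) = 2 * ln 2" using ln_realpow[of 2 2] by simp
    thus ?thesis using 1 by simp
  next
    case 2
    have "3 * ln 3 \<le> 5 * ln (2::real)"
      using ln_realpow[of 3 3] ln_realpow[of 2 5] ln_le_cancel_iff[of 27 32] by simp
    moreover have "ln (6::real) = ln 2 + ln 3" using ln_mult[of 2 3] by simp
    ultimately show ?thesis using 2 by simp
  next
    case 3
    have "ln (8::real) = 3 * ln 2" using ln_realpow[of 2 3] by simp
    moreover have "ln 8 \<le> ln (2 * real n)" using 3 by simp
    ultimately show ?thesis using le_1 ln_2_lower by linarith
  qed
qed

lemma ln_binomial_ge:
  assumes "0 < k" "k < n"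
  shows "real n * ln (real n) - real k * ln (real k) - real (n-k) * ln (real (n-k)) - ln (2 * real n) / 2
           \<le> ln (real (n choose k))"
proof -
  consider "k = 1" | "k = n - 1" | "2 \<le> k" "2 \<le> n - k" using assms by linarith
  thus ?thesis
  proof cases
    case 1
    thus ?thesis using mult_ln_diff_pred_le[of n] assms by (simp add: of_nat_diff algebra_simps)
  next
    case 2
    have "n choose k = n"
      using 2 assms binomial_symmetric[of 1 n] by simp
    thus ?thesis using 2 mult_ln_diff_pred_le[of n] assms by (simp add: of_nat_diff algebra_simps)
  next
    case 3
    thus ?thesis by (rule ln_binomial_ge_interior)
  qed
qed

lemma bin_entropy_ln: "bin_entropy x = (- x * ln x - (1 - x) * ln (1 - x)) / ln 2"
  unfolding bin_entropy_def log_def by (simp add: field_simps)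

lemma ln_2_mult_bin_entropy:
  assumes "0 < k" "k < n"
  shows "ln 2 * (real n * bin_entropy (real k / real n))
           = real n * ln (real n) - real k * ln (real k) - real (n-k) * ln (real (n-k))"
proof -
  have pos: "real k > 0" "real n > 0" "real (n-k) > 0" using assms by auto
  have compl: "1 - real k / real n = real (n-k) / real n"
    using assms pos by (simp add: field_simps)
  have "ln 2 * (real n * bin_entropy (real k / real n))
        = - real k * ln (real k / real n) - real (n-k) * ln (real (n-k) / real n)"
    unfolding bin_entropy_ln compl using pos by (simp add: field_simps)
  also have "\<dots> = - real k * (ln (real k) - ln (real n)) - real (n-k) * (ln (real (n-k)) - ln (real n))"
    using pos by (simp add: ln_div)
  also have "\<dots> = real n * ln (real n) - real k * ln (real k) - real (n-k) * ln (real (n-k))"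
    using assms by (simp add: of_nat_diff algebra_simps)
  finally show ?thesis .
qed

lemma binomial_ge_bin_entropy:
  assumes "k \<le> n" "1 \<le> n"
  shows "2 powr (real n * bin_entropy (real k / real n)) / sqrt (2 * real n) \<le> real (n choose k)"
proof -
  have sqrt_ge_1: "1 \<le> sqrt (2 * real n)" using assms by simp
  consider "k = 0" | "k = n" | "0 < k" "k < n" using assms by linarith
  thus ?thesis
  proof cases
    case 1
    thus ?thesis using sqrt_ge_1 by (simp add: bin_entropy_def divide_le_eq)
  next
    case 2
    thus ?thesis using sqrt_ge_1 assms by (simp add: bin_entropy_def divide_le_eq)
  next
    case 3
    have "sqrt (2 * real n) = exp (ln (2 * real n) / 2)"
      using assms by (simp add: exp_divide_power_eq ln_sqrt[symmetric])
    hence "2 powr (real n * bin_entropy (real k / real n)) / sqrt (2 * real n)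
          = exp (ln 2 * (real n * bin_entropy (real k / real n)) - ln (2 * real n) / 2)"
      unfolding powr_def by (simp add: exp_diff mult.commute)
    also have "\<dots> \<le> exp (ln (real (n choose k)))"
      unfolding ln_2_mult_bin_entropy[OF 3] using ln_binomial_ge[OF 3] by simp
    also have "\<dots> = real (n choose k)"
      using assms by simp
    finally show ?thesis .
  qed
qed

lemma hamming_dist_Nil: "hamming_dist [] y = 0"
  by (simp add: hamming_dist_def)

lemma hamming_dist_Cons:
  "hamming_dist (a # x) (b # y) = (if a = b then 0 else 1) + hamming_dist x y"
proof -
  have "{i. i < length (a # x) \<and> (a # x) ! i \<noteq> (b # y) ! i}
        = (if a = b then {} else {0}) \<union> Suc ` {i. i < length x \<and> x ! i \<noteq> y ! i}"
  proof (intro equalityI subsetI)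
    fix i assume "i \<in> {i. i < length (a # x) \<and> (a # x) ! i \<noteq> (b # y) ! i}"
    thus "i \<in> (if a = b then {} else {0}) \<union> Suc ` {i. i < length x \<and> x ! i \<noteq> y ! i}"
      by (cases i) auto
  qed (auto split: if_splits)
  thus ?thesis
    unfolding hamming_dist_def by (simp add: card_image)
qed

definition hamming_sphere :: "'a list \<Rightarrow> nat \<Rightarrow> 'a list set" where
  "hamming_sphere c k = {y. length y = length c \<and> hamming_dist c y = k}"

lemma finite_hamming_sphere: "finite (hamming_sphere (c :: 'a::finite list) k)"
  unfolding hamming_sphere_def
  by (rule finite_subset[OF _ finite_lists_length_eq[of UNIV "length c"]]) auto

lemma hamming_sphere_Cons_0:
  "hamming_sphere (a # c) 0 = (#) a ` hamming_sphere c 0"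
  by (auto simp: hamming_sphere_def length_Suc_conv hamming_dist_Cons split: if_splits)

lemma hamming_sphere_Cons_Suc:
  "hamming_sphere (a # c) (Suc k)
     = (#) a ` hamming_sphere c (Suc k) \<union> (\<lambda>(b, y). b # y) ` ({b. b \<noteq> a} \<times> hamming_sphere c k)"
  by (auto simp: hamming_sphere_def length_Suc_conv hamming_dist_Cons split: if_splits)

lemma card_hamming_sphere:
  "card (hamming_sphere (c :: 'a::finite list) k) = (length c choose k) * (card (UNIV :: 'a set) - 1) ^ k"
proof (induction c arbitrary: k)
  case Nil
  have "hamming_sphere ([] :: 'a list) k = (if k = 0 then {[]} else {})"
    by (auto simp: hamming_sphere_def hamming_dist_Nil)
  thus ?case by simp
next
  case (Cons a c)
  show ?case
  proof (cases k)
    case 0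
    thus ?thesis
      using Cons.IH[of 0] by (simp add: hamming_sphere_Cons_0 card_image)
  next
    case (Suc j)
    have "card {b :: 'a. b \<noteq> a} = card (UNIV :: 'a set) - 1"
      using card_Diff_singleton[of a UNIV] by (simp add: Compl_eq_Diff_UNIV[symmetric] Collect_neg_eq)
    moreover have "card ((\<lambda>(b, y). b # y) ` ({b. b \<noteq> a} \<times> hamming_sphere c j))
                     = card ({b. b \<noteq> a} \<times> hamming_sphere c j)"
      by (rule card_image) (auto simp: inj_on_def)
    ultimately have "card (hamming_sphere (a # c) k)
        = card (hamming_sphere c (Suc j)) + (card (UNIV :: 'a set) - 1) * card (hamming_sphere c j)"
      unfolding Suc hamming_sphere_Cons_Suc
      by (subst card_Un_disjoint) (auto simp: card_image finite_hamming_sphere card_cartesian_product)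
    moreover have "(length c choose Suc j) * Q ^ Suc j + Q * ((length c choose j) * Q ^ j)
                     = (Suc (length c) choose Suc j) * Q ^ Suc j" for Q :: nat
      by (simp add: algebra_simps)
    ultimately show ?thesis
      using Cons.IH Suc by simp
  qed
qed

lemma list_decodable_sphere_packing:
  fixes C :: "'a::finite list set"
  assumes code: "C \<subseteq> {x. length x = n}" and dec: "list_decodable n C tau L" and "k \<le> tau"
  shows "card C * ((n choose k) * (card (UNIV :: 'a set) - 1) ^ k) \<le> L * card (UNIV :: 'a set) ^ n"
proof -
  define W where "W = {y :: 'a list. length y = n}"
  have W: "W = {xs. set xs \<subseteq> UNIV \<and> length xs = n}" unfolding W_def by auto
  have "finite W" unfolding W by (rule finite_lists_length_eq) simp
  hence "finite C" using code finite_subset unfolding W_def by blast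
  let ?close = "\<lambda>c y. hamming_dist c y \<le> tau"
  have "(\<Sum>c\<in>C. card (hamming_sphere c k)) = (\<Sum>c\<in>C. (n choose k) * (card (UNIV :: 'a set) - 1) ^ k)"
    using code by (intro sum.cong) (auto simp: card_hamming_sphere)
  hence "card C * ((n choose k) * (card (UNIV :: 'a set) - 1) ^ k) = (\<Sum>c\<in>C. card (hamming_sphere c k))"
    by simp
  also have "\<dots> \<le> (\<Sum>c\<in>C. card {y\<in>W. ?close c y})"
    using code \<open>finite W\<close> \<open>k \<le> tau\<close>
    by (intro sum_mono card_mono) (auto simp: hamming_sphere_def W_def)
  also have "\<dots> = (\<Sum>c\<in>C. \<Sum>y\<in>W. of_bool (?close c y))"
    using \<open>finite W\<close> by (simp add: Int_def)
  also have "\<dots> = (\<Sum>y\<in>W. \<Sum>c\<in>C. of_bool (?close c y))"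
    by (rule sum.swap)
  also have "\<dots> = (\<Sum>y\<in>W. card {c\<in>C. ?close c y})"
    using \<open>finite C\<close> by (simp add: Int_def)
  also have "\<dots> \<le> (\<Sum>y\<in>W. L)"
    using dec unfolding list_decodable_def W_def by (intro sum_mono) auto
  also have "\<dots> = L * card (UNIV :: 'a set) ^ n"
    using card_lists_length_eq[of "UNIV :: 'a set" n] unfolding W by simp
  finally show ?thesis .
qed

lemma bin_entropy_nonneg:
  assumes "0 \<le> x" "x \<le> 1"
  shows "0 \<le> bin_entropy x"
proof -
  have "x * ln x \<le> 0"
    using assms by (cases "x = 0") (auto intro!: mult_nonneg_nonpos)
  moreover have "(1 - x) * ln (1 - x) \<le> 0"
    using assms by (cases "x = 1") (auto intro!: mult_nonneg_nonpos)
  ultimately show ?thesis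
    unfolding bin_entropy_ln by (intro divide_nonneg_pos) auto
qed

lemma bin_entropy_le_cross_entropy:
  assumes "0 < p" "p < 1" "0 < y" "y < 1"
  shows "bin_entropy y \<le> (- y * ln p - (1 - y) * ln (1 - p)) / ln 2"
proof -
  have "y * ln (p / y) \<le> y * (p / y - 1)"
    using assms by (intro mult_left_mono ln_le_minus_one) auto
  moreover have "(1 - y) * ln ((1 - p) / (1 - y)) \<le> (1 - y) * ((1 - p) / (1 - y) - 1)"
    using assms by (intro mult_left_mono ln_le_minus_one) auto
  moreover have "y * (p / y - 1) + (1 - y) * ((1 - p) / (1 - y) - 1) = 0"
    using assms by (simp add: field_simps)
  moreover have "y * ln (p / y) + (1 - y) * ln ((1 - p) / (1 - y))
      = (- y * ln y - (1 - y) * ln (1 - y)) - (- y * ln p - (1 - y) * ln (1 - p))"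
    using assms by (simp add: ln_div algebra_simps)
  ultimately show ?thesis
    unfolding bin_entropy_ln by (intro divide_right_mono) auto
qed

lemma bin_entropy_inverse:
  fixes q :: real
  assumes "1 < q"
  shows "bin_entropy (1 / q) = log 2 q - (q - 1) / q * log 2 (q - 1)"
proof -
  have "1 - 1 / q = (q - 1) / q" using assms by (simp add: field_simps)
  thus ?thesis
    unfolding bin_entropy_def using assms by (simp add: log_divide field_simps)
qed

definition bin_entropy' :: "real \<Rightarrow> real" where
  "bin_entropy' x = (ln (1 - x) - ln x) / ln 2"

definition bin_entropy'' :: "real \<Rightarrow> real" where
  "bin_entropy'' x = - 1 / (ln 2 * (x * (1 - x)))"

lemma has_real_derivative_bin_entropy [derivative_intros]:
  assumes "(f has_real_derivative f') (at x)" "0 < f x" "f x < 1"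
  shows "((\<lambda>x. bin_entropy (f x)) has_real_derivative bin_entropy' (f x) * f') (at x)"
proof -
  have "(bin_entropy has_real_derivative bin_entropy' (f x)) (at (f x))"
    unfolding bin_entropy_ln[abs_def] bin_entropy'_def
    apply (intro derivative_eq_intros)
    using assms(2,3) apply simp_all
    apply (simp add: field_simps)
    done
  from DERIV_chain2[OF this assms(1)] show ?thesis .
qed

lemma has_real_derivative_bin_entropy' [derivative_intros]:
  assumes "(f has_real_derivative f') (at x)" "0 < f x" "f x < 1"
  shows "((\<lambda>x. bin_entropy' (f x)) has_real_derivative bin_entropy'' (f x) * f') (at x)"
proof -
  have "(bin_entropy' has_real_derivative bin_entropy'' (f x)) (at (f x))"
    unfolding bin_entropy'_def[abs_def] bin_entropy''_def
    using assms(2,3) by (auto intro!: derivative_eq_intros simp: field_simps)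
  from DERIV_chain2[OF this assms(1)] show ?thesis .
qed

lemma bin_entropy_plus_linear_mono:
  fixes q :: real
  assumes "1 < q" "0 < a" "a \<le> b" "b \<le> (q - 1) / q"
  shows "bin_entropy a + a * log 2 (q - 1) \<le> bin_entropy b + b * log 2 (q - 1)"
proof (rule DERIV_nonneg_imp_nondecreasing[OF assms(3)])
  fix x assume x: "a \<le> x" "x \<le> b"
  have "(q - 1) / q < 1" using assms by simp
  hence x01: "0 < x" "x < 1" using x assms by linarith+
  have "x * q \<le> b * q"
    using x assms by (intro mult_right_mono) auto
  also have "\<dots> \<le> q - 1"
    using assms by (simp add: le_divide_eq)
  finally have "x * q \<le> q - 1" .
  hence "ln x \<le> ln ((1 - x) * (q - 1))"
    using x01 by (subst ln_le_cancel_iff) (auto simp: algebra_simps)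
  hence "0 \<le> bin_entropy' x * 1 + 1 * log 2 (q - 1)"
    using x01 assms unfolding bin_entropy'_def log_def by (simp add: ln_mult divide_simps)
  moreover have "((\<lambda>x. bin_entropy x + x * log 2 (q - 1)) has_real_derivative
      bin_entropy' x * 1 + 1 * log 2 (q - 1)) (at x)"
    using x01 by (auto intro!: derivative_eq_intros)
  ultimately show "\<exists>y. ((\<lambda>x. bin_entropy x + x * log 2 (q - 1)) has_real_derivative y) (at x) \<and> 0 \<le> y"
    by blast
qed

lemma bin_entropy_le_log_q:
  fixes q :: real
  assumes "1 < q" "0 < y" "y < 1"
  shows "bin_entropy y \<le> log 2 q - y * log 2 (q - 1)"
proof -
  have "0 < (q - 1) / q" "(q - 1) / q < 1" using assms by auto
  from bin_entropy_le_cross_entropy[OF this assms(2,3)]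
  have "bin_entropy y \<le> (- y * ln ((q - 1) / q) - (1 - y) * ln (1 - (q - 1) / q)) / ln 2" .
  also have "\<dots> = log 2 q - y * log 2 (q - 1)"
    using assms by (simp add: ln_div log_def field_simps)
  finally show ?thesis .
qed

lemma q_ary_weight_bounds:
  assumes "2 \<le> q"
  shows "1/2 \<le> (real q - 1) / real q" "(real q - 1) / real q < 1"
  using assms by (auto simp: field_simps)

lemma q_ary_weight_mult_bounds:
  assumes "2 \<le> q" "0 < x" "x < 1"
  shows "0 < (real q - 1) / real q * x" "(real q - 1) / real q * x < 1"
proof -
  have m: "0 < (real q - 1) / real q" "(real q - 1) / real q < 1"
    using q_ary_weight_bounds[OF assms(1)] by linarith+
  thus "0 < (real q - 1) / real q * x"
    using assms by simp
  have "(real q - 1) / real q * x < (real q - 1) / real q * 1"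
    using assms(3) m(1) by (rule mult_strict_left_mono)
  thus "(real q - 1) / real q * x < 1"
    using m by linarith
qed

lemma eta_eq_bin_entropy_plus_linear:
  assumes "2 \<le> q"
  shows "eta q e = bin_entropy ((real q - 1) / real q * (1 - e))
           + (real q - 1) / real q * (1 - e) * log 2 (real q - 1) - (1 - e) * log 2 (real q)"
  unfolding eta_def using assms by (simp add: bin_entropy_inverse algebra_simps)

lemma eta_le_mult_log:
  assumes "2 \<le> q" "0 < e" "e < 1"
  shows "eta q e \<le> e * log 2 (real q)"
proof -
  have "0 < (real q - 1) / real q * (1 - e)" "(real q - 1) / real q * (1 - e) < 1"
    using q_ary_weight_mult_bounds[of q "1 - e"] assms by auto
  from bin_entropy_le_log_q[OF _ this] assms show ?thesis
    unfolding eta_eq_bin_entropy_plus_linear[OF assms(1)] by (simp add: algebra_simps)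
qed

definition eta' :: "nat \<Rightarrow> real \<Rightarrow> real" where
  "eta' q e = bin_entropy (1 / real q)
     - (real q - 1) / real q * bin_entropy' ((real q - 1) / real q * (1 - e))"

definition eta'' :: "nat \<Rightarrow> real \<Rightarrow> real" where
  "eta'' q e = ((real q - 1) / real q)\<^sup>2 * bin_entropy'' ((real q - 1) / real q * (1 - e))"

lemma has_real_derivative_eta [derivative_intros]:
  assumes "2 \<le> q" "(f has_real_derivative f') (at x)" "0 < f x" "f x < 1"
  shows "((\<lambda>x. eta q (f x)) has_real_derivative eta' q (f x) * f') (at x)"
proof -
  define m where "m = (real q - 1) / real q"
  have "0 < m * (1 - f x)" "m * (1 - f x) < 1"
    using q_ary_weight_mult_bounds[of q "1 - f x"] assms unfolding m_def by auto
  thus ?thesis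
    unfolding eta_def eta'_def m_def[symmetric]
    by (auto intro!: derivative_eq_intros assms(2) simp: algebra_simps)
qed

lemma has_real_derivative_eta' [derivative_intros]:
  assumes "2 \<le> q" "(f has_real_derivative f') (at x)" "0 < f x" "f x < 1"
  shows "((\<lambda>x. eta' q (f x)) has_real_derivative eta'' q (f x) * f') (at x)"
proof -
  define m where "m = (real q - 1) / real q"
  have "0 < m * (1 - f x)" "m * (1 - f x) < 1"
    using q_ary_weight_mult_bounds[of q "1 - f x"] assms unfolding m_def by auto
  thus ?thesis
    unfolding eta'_def eta''_def m_def[symmetric]
    by (auto intro!: derivative_eq_intros assms(2) simp: algebra_simps power2_eq_square)
qed

lemma bin_entropy''_neg:
  assumes "0 < x" "x < 1"
  shows "bin_entropy'' x < 0"
  using assms unfolding bin_entropy''_def by (simp add: divide_neg_pos)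

lemma bin_entropy''_mono:
  assumes "0 < u" "u \<le> v" "u + v \<le> 1"
  shows "bin_entropy'' u \<le> bin_entropy'' v"
proof -
  have "v * (1 - v) - u * (1 - u) = (v - u) * (1 - (u + v))"
    by (simp add: algebra_simps)
  hence "u * (1 - u) \<le> v * (1 - v)"
    using assms by (metis diff_ge_0_iff_ge mult_nonneg_nonneg)
  moreover have "0 < u * (1 - u)"
    using assms by simp
  ultimately show ?thesis
    unfolding bin_entropy''_def by (simp add: divide_simps mult_left_mono)
qed

lemma concave_on_eta:
  assumes "2 \<le> q" "0 < a" "b < 1"
  shows "concave_on {a..b} (eta q)"
proof (rule f''_le0_imp_concave)
  fix e assume e: "e \<in> {a..b}"
  hence "0 < e" "e < 1" using assms by auto
  thus "(eta q has_real_derivative eta' q e) (at e)" "(eta' q has_real_derivative eta'' q e) (at e)"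
    using has_real_derivative_eta[OF assms(1) DERIV_ident] has_real_derivative_eta'[OF assms(1) DERIV_ident]
    by auto
  show "eta'' q e \<le> 0"
    using bin_entropy''_neg q_ary_weight_mult_bounds[of q "1 - e"] assms \<open>0 < e\<close> \<open>e < 1\<close>
    unfolding eta''_def by (simp add: mult_nonneg_nonpos less_imp_le)
qed simp

lemma concave_on_eta_reflect_diff:
  assumes "2 \<le> q" "0 < d"
  shows "concave_on {d..1/2} (\<lambda>e. eta q (1 - e) - eta q e)"
proof (rule f''_le0_imp_concave)
  fix e assume "e \<in> {d..1/2}"
  hence e: "0 < e" "e \<le> 1/2" using assms by auto
  show "((\<lambda>e. eta q (1 - e) - eta q e) has_real_derivative - eta' q (1 - e) - eta' q e) (at e)"
    using e by (auto intro!: derivative_eq_intros assms(1))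
  show "((\<lambda>e. - eta' q (1 - e) - eta' q e) has_real_derivative eta'' q (1 - e) - eta'' q e) (at e)"
    using e by (auto intro!: derivative_eq_intros assms(1))
  define m where "m = (real q - 1) / real q"
  have "0 < m * e" "m * e \<le> m * (1 - e)" "m * e + m * (1 - e) \<le> 1"
    using q_ary_weight_bounds[OF assms(1)] e unfolding m_def[symmetric] by (auto simp: algebra_simps)
  from bin_entropy''_mono[OF this] show "eta'' q (1 - e) - eta'' q e \<le> 0"
    unfolding eta''_def m_def[symmetric] by (simp add: mult_left_mono)
qed simp

lemma eta_reflect_diff_lower:
  assumes "2 \<le> q" "0 < d" "d \<le> 1/2"
  shows "- (2 * bin_entropy (1 / real q) + log 2 (real q - 1)) * d \<le> eta q (1 - d) - eta q d"
proof -
  define m where "m = (real q - 1) / real q"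
  have "0 < m * d" "m * d < 1" "0 < m * (1 - d)" "m * (1 - d) < 1"
    using q_ary_weight_mult_bounds[of q d] q_ary_weight_mult_bounds[of q "1 - d"] assms
    unfolding m_def by auto
  hence "0 \<le> bin_entropy (m * d)"
    and "bin_entropy (m * (1 - d)) \<le> log 2 (real q) - m * (1 - d) * log 2 (real q - 1)"
    using bin_entropy_nonneg bin_entropy_le_log_q[of "real q"] assms by auto
  moreover have "bin_entropy (1 / real q) = log 2 (real q) - m * log 2 (real q - 1)"
    using bin_entropy_inverse[of "real q"] assms unfolding m_def by simp
  moreover have "m * d * log 2 (real q - 1) \<le> d * log 2 (real q - 1)"
    using assms q_ary_weight_bounds[OF assms(1)] unfolding m_def[symmetric]
    by (intro mult_right_mono) auto
  ultimately show ?thesis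
    unfolding eta_def m_def[symmetric] by (simp add: algebra_simps)
qed

lemma concave_on_nonneg_from_right:
  fixes f :: "real \<Rightarrow> real"
  assumes concave: "\<And>d. 0 < d \<Longrightarrow> d \<le> x \<Longrightarrow> concave_on {d..b} f"
    and "0 \<le> f b"
    and linear: "\<And>d. 0 < d \<Longrightarrow> d \<le> b \<Longrightarrow> - c * d \<le> f d"
    and "0 < x" "x \<le> b"
  shows "0 \<le> f x"
proof (rule field_le_epsilon)
  fix e :: real assume "0 < e"
  define d where "d = min x (e / (\<bar>c\<bar> + 1))"
  have d: "0 < d" "d \<le> x" "\<bar>c\<bar> * d \<le> e"
    using \<open>0 < x\<close> \<open>0 < e\<close> by (auto simp: d_def min_def field_simps mult_left_mono)
  have "- \<bar>c\<bar> * d \<le> f d"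
    using linear[of d] d \<open>x \<le> b\<close> by (smt (verit) abs_ge_self mult_right_mono)
  hence "- e \<le> min (f d) (f b)"
    unfolding min.bounded_iff using d \<open>0 \<le> f b\<close> \<open>0 < e\<close> by (intro conjI; linarith)
  also have "min (f d) (f b) \<le> f x"
    using concave_on_ge_min[OF concave[OF d(1,2)]] d \<open>x \<le> b\<close> by simp
  finally show "0 \<le> f x + e"
    by simp
qed

(* eta q (1 - e) - eta q e vanishes at 1/2 and is concave on (0, 1/2], but its derivative is unbounded
   at 0; the linear lower bound near 0 replaces continuity there. *)
lemma eta_le_eta_reflect:
  assumes "2 \<le> q" "0 < e" "e \<le> 1/2"
  shows "eta q e \<le> eta q (1 - e)"
proof -
  have "0 \<le> eta q (1 - e) - eta q e"
  proof (rule concave_on_nonneg_from_right[where f = "\<lambda>e. eta q (1 - e) - eta q e" and b = "1/2"])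
    show "concave_on {d..1/2} (\<lambda>e. eta q (1 - e) - eta q e)" if "0 < d" "d \<le> e" for d
      using concave_on_eta_reflect_diff[OF assms(1) that(1)] .
    show "- (2 * bin_entropy (1 / real q) + log 2 (real q - 1)) * d \<le> eta q (1 - d) - eta q d"
      if "0 < d" "d \<le> 1/2" for d
      using eta_reflect_diff_lower[OF assms(1) that] .
  qed (use assms in simp_all)
  thus ?thesis by simp
qed

lemma eta_ge_eta_of_mem:
  assumes "2 \<le> q" "0 < eps" "eps \<le> 1/2" "eps \<le> R" "R \<le> 1 - eps"
  shows "eta q eps \<le> eta q R"
proof -
  have "concave_on {eps..1 - eps} (eta q)"
    using assms by (intro concave_on_eta) auto
  from concave_on_ge_min[OF this] have "min (eta q eps) (eta q (1 - eps)) \<le> eta q R"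
    using assms by simp
  thus ?thesis
    using eta_le_eta_reflect[OF assms(1-3)] by simp
qed

lemma binomial_mult_pow_ge_eta:
  assumes "2 \<le> q" "1 \<le> n" "R < 1"
    and radius: "(real q - 1) / real q * (1 - R) * real n \<le> real k" "real k \<le> (real q - 1) / real q * real n"
  shows "2 powr (real n * (eta q R + (1 - R) * log 2 (real q))) / sqrt (2 * real n)
           \<le> real (n choose k) * (real q - 1) ^ k"
proof -
  define x where "x = real k / real n"
  have "(real q - 1) / real q * real n \<le> real n"
    using assms(1) by (simp add: field_simps)
  hence "k \<le> n"
    using radius(2) by linarith
  have "(real q - 1) / real q * (1 - R) \<le> x" "x \<le> (real q - 1) / real q"
    using radius assms(2) unfolding x_def by (simp_all add: field_simps)
  moreover have "0 < (real q - 1) / real q * (1 - R)"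
    using q_ary_weight_bounds(1)[OF assms(1)] assms(3) by (intro mult_pos_pos; linarith)
  ultimately have "bin_entropy ((real q - 1) / real q * (1 - R)) + (real q - 1) / real q * (1 - R) * log 2 (real q - 1)
                   \<le> bin_entropy x + x * log 2 (real q - 1)"
    using assms(1) by (intro bin_entropy_plus_linear_mono) auto
  hence "eta q R + (1 - R) * log 2 (real q) \<le> bin_entropy x + x * log 2 (real q - 1)"
    unfolding eta_eq_bin_entropy_plus_linear[OF assms(1)] by (simp add: algebra_simps)
  hence "2 powr (real n * (eta q R + (1 - R) * log 2 (real q))) / sqrt (2 * real n)
         \<le> 2 powr (real n * (bin_entropy x + x * log 2 (real q - 1))) / sqrt (2 * real n)"
    using assms(2) by (intro divide_right_mono powr_mono mult_left_mono) auto
  also have "\<dots> = 2 powr (real n * bin_entropy x) / sqrt (2 * real n) * 2 powr (real k * log 2 (real q - 1))"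
    using assms(2) unfolding x_def by (simp add: powr_add[symmetric] algebra_simps)
  also have "2 powr (real k * log 2 (real q - 1)) = (real q - 1) ^ k"
    using assms(1) by (simp add: mult.commute[of "real k"] powr_powr[symmetric] powr_realpow)
  also have "2 powr (real n * bin_entropy x) / sqrt (2 * real n) * (real q - 1) ^ k
             \<le> real (n choose k) * (real q - 1) ^ k"
    using binomial_ge_bin_entropy[OF \<open>k \<le> n\<close> assms(2)] assms(1) unfolding x_def
    by (intro mult_right_mono) auto
  finally show ?thesis .
qed

lemma list_decodable_ge_eta:
  fixes C :: "'a::finite list set"
  defines "q \<equiv> card (UNIV :: 'a set)"
  assumes "2 \<le> q" and code: "C \<subseteq> {x. length x = n}" and dec: "list_decodable n C tau L"
    and "k \<le> tau" "1 \<le> n" "R < 1"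
    and card: "real (card C) = real q powr (real n * R)"
    and radius: "(real q - 1) / real q * (1 - R) * real n \<le> real k" "real k \<le> (real q - 1) / real q * real n"
  shows "2 powr (eta q R * real n) / sqrt (2 * real n) \<le> real L"
proof -
  have "card C * ((n choose k) * (q - 1) ^ k) \<le> L * q ^ n"
    using list_decodable_sphere_packing[OF code dec \<open>k \<le> tau\<close>] unfolding q_def .
  hence "real (card C * ((n choose k) * (q - 1) ^ k)) \<le> real (L * q ^ n)"
    by (simp only: of_nat_le_iff)
  hence packing: "real (card C) * (real (n choose k) * (real q - 1) ^ k) \<le> real L * real q ^ n"
    using \<open>2 \<le> q\<close> by (simp add: of_nat_diff)
  have two_powr: "2 powr (a * log 2 (real q)) = real q powr a" for a
    using \<open>2 \<le> q\<close> by (simp add: mult.commute[of a] powr_powr[symmetric])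
  have "2 powr (eta q R * real n) / sqrt (2 * real n) * real q ^ n
        = real q powr (real n * R) * (2 powr (real n * (eta q R + (1 - R) * log 2 (real q))) / sqrt (2 * real n))"
    using \<open>2 \<le> q\<close>
    by (simp add: two_powr[symmetric] powr_realpow[symmetric] powr_add[symmetric] algebra_simps)
  also have "\<dots> \<le> real (card C) * (real (n choose k) * (real q - 1) ^ k)"
    unfolding card using binomial_mult_pow_ge_eta[OF \<open>2 \<le> q\<close> \<open>1 \<le> n\<close> \<open>R < 1\<close> radius]
    by (intro mult_left_mono) auto
  also have "\<dots> \<le> real L * real q ^ n"
    by (rule packing)
  finally show ?thesis
    by (rule mult_right_le_imp_le) (use \<open>2 \<le> q\<close> in simp)
qed

lemma card_UNIV_ge_2: "2 \<le> card (UNIV :: 'a::{finite,zero_neq_one} set)"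
proof -
  have "card {0 :: 'a, 1} \<le> card (UNIV :: 'a set)"
    by (intro card_mono) auto
  thus ?thesis by simp
qed

lemma card_eq_powr_rate:
  fixes q :: real
  assumes "1 < q" "0 < log q (real c) / real n"
  shows "1 \<le> n" "real c = q powr (real n * (log q (real c) / real n))"
proof -
  show "1 \<le> n"
    using assms(2) by (cases n) auto
  moreover have "c \<noteq> 0"
    using assms(2) by (cases "c = 0") (auto simp: log_def)
  ultimately show "real c = q powr (real n * (log q (real c) / real n))"
    using assms(1) by simp
qed

lemma eta_bound_le_powr_rate:
  assumes "2 \<le> q" "0 < eps" "eps < 1" "eps \<le> R" "1 \<le> n"
  shows "1 / sqrt (2 * real n) * 2 powr (eta q eps * real n) \<le> real q powr (real n * R)"
proof -
  have "1 / sqrt (2 * real n) * 2 powr (eta q eps * real n) \<le> 2 powr (eta q eps * real n)"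
    using assms(5) by (simp add: divide_le_eq)
  also have "\<dots> \<le> 2 powr (real n * eps * log 2 (real q))"
    using eta_le_mult_log[OF assms(1-3)] assms(5) by (intro powr_mono) (auto simp: algebra_simps)
  also have "\<dots> = real q powr (real n * eps)"
    using assms(1) by (simp add: mult.commute[of _ "log 2 (real q)"] powr_powr[symmetric])
  also have "\<dots> \<le> real q powr (real n * R)"
    using assms by (intro powr_mono mult_left_mono) auto
  finally show ?thesis .
qed

lemma weight_radius_le_of_list_size_ge:
  assumes "2 \<le> q" "real q - 1 \<le> real L" "R \<le> 1"
    and "real L * real n * (1 - R) / (real L + 1) \<le> real tau"
  shows "(real q - 1) / real q * (1 - R) * real n \<le> real tau"
proof -
  have "(real q - 1) / real q \<le> real L / (real L + 1)"
    using assms(1,2) by (simp add: field_simps)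
  hence "(real q - 1) / real q * ((1 - R) * real n) \<le> real L / (real L + 1) * ((1 - R) * real n)"
    using assms(3) by (intro mult_right_mono) auto
  thus ?thesis
    using assms(4) by (simp add: algebra_simps)
qed

(* Take k = min tau j with j = floor ((q-1) n / q); if j is too small then (q-1)/q (n-1) <= j forces nR < 1. *)
lemma obtain_radius_or_rate_lt_one:
  fixes q n tau :: nat
  assumes "2 \<le> q" and tau: "(real q - 1) / real q * (1 - R) * real n \<le> real tau"
  obtains k where "k \<le> tau" "(real q - 1) / real q * (1 - R) * real n \<le> real k"
      "real k \<le> (real q - 1) / real q * real n"
    | "real n * R < 1"
proof -
  define m where "m = (real q - 1) / real q"
  define j where "j = (q - 1) * n div q"
  have "real (q * j) \<le> real ((q - 1) * n)"
    unfolding j_def of_nat_le_iff by simp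
  hence j_le: "real j \<le> m * real n"
    using assms(1) unfolding m_def by (simp add: of_nat_diff field_simps)
  have "(q - 1) * n mod q < q"
    using assms(1) by simp
  moreover have "(q - 1) * n = q * j + (q - 1) * n mod q"
    unfolding j_def by simp
  ultimately have "(q - 1) * n \<le> q * j + (q - 1)"
    by linarith
  hence "real ((q - 1) * n) \<le> real (q * j + (q - 1))"
    by (simp only: of_nat_le_iff)
  hence j_ge: "m * (real n - 1) \<le> real j"
    using assms(1) unfolding m_def by (simp add: of_nat_diff field_simps)
  show thesis
  proof (cases "m * (1 - R) * real n \<le> real j")
    case True
    show thesis
      by (rule that(1)[of "min tau j"]) (use True tau j_le in \<open>auto simp: m_def min_def\<close>)
  next
    case False
    hence "0 < m * (1 - real n * R)"
      using j_ge by (simp add: algebra_simps)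
    moreover have "0 < m"
      using q_ary_weight_bounds(1)[OF assms(1)] unfolding m_def by linarith
    ultimately show thesis
      using that(2) by (simp add: zero_less_mult_iff)
  qed
qed

theorem mainTheorem2:
  fixes C :: "('a::{finite,field}) list set"
    and n L tau :: nat and eps :: real
  defines "q \<equiv> card (UNIV :: 'a set)"
  defines "R \<equiv> log (real q) (real (card C)) / real n"
  assumes eps: "0 < eps" "eps \<le> 1/2"
    and code: "C \<subseteq> {x. length x = n}"
    and rate: "eps \<le> R" "R \<le> 1 - eps"
    and L: "L \<ge> 1" "real L < 1 / sqrt (2 * real n) * 2 powr (eta q eps * real n)"
    and tau: "real tau \<ge> real L * real n * (1 - R) / (real L + 1)"
    and dec: "list_decodable n C tau L"
  shows "real L < real q - 1"
proof (rule ccontr)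
  assume "\<not> real L < real q - 1"
  have q: "2 \<le> q"
    unfolding q_def by (rule card_UNIV_ge_2)
  have tau': "(real q - 1) / real q * (1 - R) * real n \<le> real tau"
    using weight_radius_le_of_list_size_ge[OF q _ _ tau] \<open>\<not> real L < real q - 1\<close> rate eps by simp
  have n: "1 \<le> n" and card: "real (card C) = real q powr (real n * R)"
    using card_eq_powr_rate[of "real q" "card C" n] q eps rate unfolding R_def by auto
  have L_lt_card: "real L < real (card C)"
    using L(2) eta_bound_le_powr_rate[OF q eps(1) _ rate(1) n] eps card by simp
  consider k where "k \<le> tau" "(real q - 1) / real q * (1 - R) * real n \<le> real k"
      "real k \<le> (real q - 1) / real q * real n"
    | "real n * R < 1"
    using obtain_radius_or_rate_lt_one[OF q tau'] by blast
  thus False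
  proof cases
    case 1
    have "2 powr (eta q R * real n) / sqrt (2 * real n) \<le> real L"
      using list_decodable_ge_eta[of C n tau L k R, folded q_def] 1 q code dec n card rate eps by simp
    moreover have "2 powr (eta q eps * real n) / sqrt (2 * real n) \<le> 2 powr (eta q R * real n) / sqrt (2 * real n)"
      using eta_ge_eta_of_mem[OF q eps rate] by (intro divide_right_mono powr_mono mult_right_mono) auto
    ultimately show False
      using L(2) by simp
  next
    case 2
    hence "real (card C) < real q powr 1"
      unfolding card using q by (intro powr_less_mono) auto
    thus False
      using L_lt_card \<open>\<not> real L < real q - 1\<close> q by simp
  qed
qed

end
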